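(* Let $\rho\in(0,1)$. For any $z\in\mathbb C$ with $|z|\le\rho$, $$\big|1-\exp(\mathrm i\phi(1+z))+\mathrm i\,\Im(z)\big|\le\frac{2-\rho}{(1-\rho)^2}|z|^2.$$
   Context: For $u\in\mathbb C$, $\exp(\mathrm i\phi(u))=u/|u|$ if $u\neq0$ (and $1$ if $u=0$). *)

theory Defs
  imports "HOL-Analysis.Analysis"
begin

text \<open>exp(i phi(u)): the unit phase of u, with the convention 1 at u = 0.\<close>
definition phase_exp :: "complex \<Rightarrow> complex" where
  "phase_exp u = (if u = 0 then 1 else u / complex_of_real (cmod u))"

end

theory Submission
  imports Defs
begin

text \<open>Write \<open>w = 1 + z\<close> and \<open>r = |w|\<close>. Then \<open>1 - w/r + i Im w = ((r - Re w) + i Im w (r - 1)) / r\<close>.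
  Both parts of the numerator are quadratically small: \<open>r - Re w = (Im w)\<^sup>2 / (r + Re w)\<close>, and
  \<open>|Im w| \<le> |z|\<close>, \<open>|r - 1| \<le> |z|\<close>. Since \<open>r\<close> and \<open>Re w\<close> are at least \<open>1 - \<rho>\<close>, the quotient is at most
  \<open>(1/(2(1-\<rho>)) + 1) |z|\<^sup>2 / (1-\<rho>)\<close>, which is below the claimed constant.\<close>

lemma phase_exp_nonzero: "w \<noteq> 0 \<Longrightarrow> phase_exp w = w / complex_of_real (cmod w)"
  by (simp add: phase_exp_def)

lemma abs_norm_one_plus_minus_one: "\<bar>cmod (1 + z) - 1\<bar> \<le> cmod z"
  using norm_triangle_ineq3[of "1 + z" 1] by simp

lemma cmod_minus_Re_le:
  assumes "Re w > 0"
  shows "cmod w - Re w \<le> (Im w)\<^sup>2 / (2 * Re w)"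
proof -
  have "Re w \<le> cmod w" by (rule complex_Re_le_cmod)
  moreover have "(cmod w)\<^sup>2 = (Re w)\<^sup>2 + (Im w)\<^sup>2" by (rule cmod_power2)
  ultimately have "cmod w - Re w = (Im w)\<^sup>2 / (cmod w + Re w)"
    using assms by (simp add: field_simps power2_eq_square)
  also have "\<dots> \<le> (Im w)\<^sup>2 / (2 * Re w)"
    using assms \<open>Re w \<le> cmod w\<close> by (intro divide_left_mono) auto
  finally show ?thesis .
qed

lemma norm_one_minus_phase_exp_le:
  assumes "w \<noteq> 0"
  shows "cmod (1 - phase_exp w + \<i> * complex_of_real (Im w))
           \<le> ((cmod w - Re w) + \<bar>Im w\<bar> * \<bar>cmod w - 1\<bar>) / cmod w"
proof -
  define r where "r = cmod w"
  have r: "r > 0" "Re w \<le> r" using assms complex_Re_le_cmod by (auto simp: r_def)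
  have "1 - phase_exp w + \<i> * complex_of_real (Im w)
      = Complex ((r - Re w) / r) (Im w * (r - 1) / r)"
    using r by (simp add: phase_exp_nonzero[OF assms] r_def[symmetric] complex_eq_iff field_simps)
  also have "cmod \<dots> \<le> \<bar>(r - Re w) / r\<bar> + \<bar>Im w * (r - 1) / r\<bar>"
    using cmod_le[of "Complex ((r - Re w) / r) (Im w * (r - 1) / r)"] by simp
  also have "\<dots> = ((r - Re w) + \<bar>Im w\<bar> * \<bar>r - 1\<bar>) / r"
    using r by (simp add: abs_mult add_divide_distrib)
  finally show ?thesis by (simp add: r_def)
qed

theorem lemma17:
  fixes \<rho> :: real and z :: complex
  assumes "0 < \<rho>" and "\<rho> < 1" and "cmod z \<le> \<rho>"
  shows "cmod (1 - phase_exp (1 + z) + \<i> * complex_of_real (Im z))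
           \<le> (2 - \<rho>) / (1 - \<rho>)\<^sup>2 * (cmod z)\<^sup>2"
proof -
  define w where "w = 1 + z"
  define s where "s = cmod z"
  define a where "a = 1 - \<rho>"
  have a: "a > 0" "s \<le> 1 - a" using assms by (auto simp: a_def s_def)
  have Im_w: "Im w = Im z" and Im_s: "\<bar>Im z\<bar> \<le> s"
    using abs_Im_le_cmod by (auto simp: w_def s_def)
  have Re_w: "a \<le> Re w"
    using abs_Re_le_cmod[of z] a by (auto simp: w_def s_def)
  have norm_w: "\<bar>cmod w - 1\<bar> \<le> s" "a \<le> cmod w"
    using abs_norm_one_plus_minus_one[of z] a by (auto simp: w_def s_def)
  have "cmod w - Re w \<le> s\<^sup>2 / (2 * a)"
  proof -
    have "(Im w)\<^sup>2 \<le> s\<^sup>2" using power_mono[OF Im_s, of 2] Im_w by simp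
    then have "(Im w)\<^sup>2 / (2 * Re w) \<le> s\<^sup>2 / (2 * a)"
      using Re_w a by (intro frac_le) auto
    then show ?thesis
      using cmod_minus_Re_le[of w] Re_w a by linarith
  qed
  moreover have "\<bar>Im w\<bar> * \<bar>cmod w - 1\<bar> \<le> s\<^sup>2"
    using mult_mono[OF Im_s norm_w(1)] Im_w by (simp add: power2_eq_square s_def)
  moreover have "w \<noteq> 0" using norm_w a by auto
  ultimately have "cmod (1 - phase_exp w + \<i> * complex_of_real (Im w)) \<le> (s\<^sup>2 / (2 * a) + s\<^sup>2) / a"
    using norm_one_minus_phase_exp_le[of w] norm_w a
    by (smt (verit) frac_le zero_le_power2 divide_nonneg_nonneg)
  also have "\<dots> \<le> (1 + a) / a\<^sup>2 * s\<^sup>2"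
    using a by (simp add: field_simps power2_eq_square)
  finally show ?thesis by (simp add: w_def s_def a_def Im_w[unfolded w_def])
qed

end
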